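(* Let $p$ be an odd prime and let $W_p=C_2\wr C_p$. Then $\mathrm{diam}_{\max}(W_p)\le 20(p-1)$.
   Context: The wreath product $W_p=C_2\wr C_p$ is the semidirect product $U\rtimes C_p$, where $U=\mathbb{F}_2^{\,p}$ and a generator of the cyclic group $C_p$ of order $p$ acts on $U$ by cyclically permuting coordinates; thus $|W_p|=p\,2^p$. For a finite group $G$ and a generating set $X$, the Cayley graph $\mathrm{Cay}(G,X)$ has vertex set $G$, with $g$ adjacent to $gx^{\pm1}$ for $x\in X$; $\mathrm{diam}(G,X)$ is its diameter, i.e. the smallest $k$ such that every element of $G$ is a product of at most $k$ elements of $X\cup X^{-1}$. The worst diameter is $\mathrm{diam}_{\max}(G)=\max\{\mathrm{diam}(G,X): X\subseteq G,\ \langle X\rangle=G\}$. *)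

theory Defs
  imports "HOL-Algebra.Generated_Groups" "HOL-Computational_Algebra.Primes"
begin

definition word_prod :: "('a, 'b) monoid_scheme \<Rightarrow> 'a list \<Rightarrow> 'a" where
  "word_prod G xs = foldr (\<lambda>x y. x \<otimes>\<^bsub>G\<^esub> y) xs \<one>\<^bsub>G\<^esub>"

definition cay_diam :: "('a, 'b) monoid_scheme \<Rightarrow> 'a set \<Rightarrow> nat" where
  "cay_diam G X = (LEAST k. \<forall>g \<in> carrier G. \<exists>xs.
      set xs \<subseteq> X \<union> (\<lambda>x. inv\<^bsub>G\<^esub> x) ` X \<and> length xs \<le> k \<and> g = word_prod G xs)"

definition diam_max :: "('a, 'b) monoid_scheme \<Rightarrow> nat" where
  "diam_max G = Max {cay_diam G X | X. X \<subseteq> carrier G \<and> generate G X = carrier G}"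

text \<open>An element (A, a): A \<subseteq> {0..<p}
  is the support of a vector in F_2^p, a \<in> {0..<p} the element of C_p.
  The generator of C_p acts by cyclically shifting coordinates i \<mapsto> i+1 mod p.\<close>
definition cshift :: "nat \<Rightarrow> nat \<Rightarrow> nat set \<Rightarrow> nat set" where
  "cshift p a B = (\<lambda>i. (i + a) mod p) ` B"

definition wreath_mult :: "nat \<Rightarrow> nat set \<times> nat \<Rightarrow> nat set \<times> nat \<Rightarrow> nat set \<times> nat" where
  "wreath_mult p x y = (let A = fst x; a = snd x; B = cshift p a (fst y); b = snd y in
     ((A - B) \<union> (B - A), (a + b) mod p))"

definition wreath :: "nat \<Rightarrow> (nat set \<times> nat) monoid" where
  "wreath p = \<lparr> carrier = {x. fst x \<subseteq> {0..<p} \<and> snd x < p},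
     monoid.mult = wreath_mult p, monoid.one = ({}, 0) \<rparr>"

end

theory Submission
  imports Defs "HOL-Number_Theory.Cong"
begin

text \<open>Fix a generator \<open>t \<in> X\<close> whose image \<open>a\<close> in \<open>C\<^sub>p\<close> is nonzero. As \<open>p\<close> is prime, every
  element is \<open>v t\<^sup>k\<close> with \<open>v\<close> in the base \<open>U = \<bbbF>\<^sub>2\<^sup>p\<close> and \<open>k < p\<close>. The commutators
  \<open>[t, g]\<close> lie in \<open>U\<close> and satisfy \<open>[t, g h] = [t, g] \<cdot> g [t, h] g\<^sup>-\<^sup>1\<close>, so all of them lie in
  the \<open>\<bbbF>\<^sub>2[C\<^sub>p]\<close>-submodule \<open>M\<close> of \<open>U\<close> spanned by the \<open>[t, x]\<close>, \<open>x \<in> X\<close>. In particular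
  \<open>[t, e\<^sub>0] = e\<^sub>a + e\<^sub>0\<close> lies in \<open>M\<close>, and its shifts generate all vectors of even weight.
  Since \<open>dim U = p\<close>, an element of \<open>M\<close> is a sum of at most \<open>p\<close> of the spanning vectors
  \<open>t\<^sup>k [t, x] t\<^sup>-\<^sup>k\<close>; grouped by \<open>k\<close> they form a word of length at most \<open>p + 4p + p\<close>. With
  an odd-weight vector of length at most \<open>p\<close>, every vector has length at most \<open>7p\<close> and every
  element at most \<open>8p \<le> 20(p - 1)\<close>.\<close>

section \<open>Commutators and word length\<close>

lemma (in group) inv_mult_cancel_left:
  "x \<in> carrier G \<Longrightarrow> y \<in> carrier G \<Longrightarrow> inv x \<otimes> (x \<otimes> y) = y"
  by (simp add: m_assoc[symmetric])

lemma (in group) commutator_mult: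
  assumes "t \<in> carrier G" "g \<in> carrier G" "h \<in> carrier G"
  shows "t \<otimes> (g \<otimes> h) \<otimes> inv t \<otimes> inv (g \<otimes> h)
    = (t \<otimes> g \<otimes> inv t \<otimes> inv g) \<otimes> (g \<otimes> (t \<otimes> h \<otimes> inv t \<otimes> inv h) \<otimes> inv g)"
  using assms by (simp add: inv_mult_group m_assoc inv_mult_cancel_left)

lemma (in group) commutator_inv:
  assumes "t \<in> carrier G" "h \<in> carrier G"
  shows "t \<otimes> inv h \<otimes> inv t \<otimes> inv (inv h) = inv h \<otimes> inv (t \<otimes> h \<otimes> inv t \<otimes> inv h) \<otimes> h"
  using assms by (simp add: inv_mult_group m_assoc inv_mult_cancel_left)

lemma (in group) generator_not_in_proper_subgroup:
  assumes "generate G X = carrier G" "subgroup H G" "H \<noteq> carrier G"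
  obtains x where "x \<in> X" "x \<notin> H"
proof -
  have "\<not> X \<subseteq> H"
  proof
    assume "X \<subseteq> H"
    then have "carrier G \<subseteq> H"
      using generate_subgroup_incl[OF _ assms(2)] assms(1) by metis
    then show False
      using assms(3) subgroup.subset[OF assms(2)] by blast
  qed
  then show ?thesis
    using that by blast
qed

definition word_ball :: "('a, 'b) monoid_scheme \<Rightarrow> 'a set \<Rightarrow> nat \<Rightarrow> 'a set" where
  "word_ball G Y k = {word_prod G xs | xs. set xs \<subseteq> Y \<and> length xs \<le> k}"

lemma cay_diam_le:
  assumes "carrier G \<subseteq> word_ball G (X \<union> (\<lambda>x. inv\<^bsub>G\<^esub> x) ` X) k"
  shows "cay_diam G X \<le> k"
  using assms unfolding cay_diam_def word_ball_def by (intro Least_le) blast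

lemma diam_max_le:
  assumes "group G" "finite (carrier G)"
    and "\<And>X. X \<subseteq> carrier G \<Longrightarrow> generate G X = carrier G \<Longrightarrow> cay_diam G X \<le> k"
  shows "diam_max G \<le> k"
proof -
  define gens where "gens = {X. X \<subseteq> carrier G \<and> generate G X = carrier G}"
  have "generate G (carrier G) = carrier G"
    using group.generate_incl[OF assms(1) subset_refl] by (auto intro: generate.incl)
  then have "carrier G \<in> gens"
    by (simp add: gens_def)
  moreover have "finite gens"
    by (rule finite_subset[of _ "Pow (carrier G)"]) (use assms(2) in \<open>auto simp: gens_def\<close>)
  moreover have "{cay_diam G X | X. X \<subseteq> carrier G \<and> generate G X = carrier G} = cay_diam G ` gens"
    by (auto simp: gens_def)
  ultimately show ?thesis
    unfolding diam_max_def using assms(3) by (intro Max.boundedI) (auto simp: gens_def)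
qed

context group
begin

lemma word_prod_closed: "set xs \<subseteq> carrier G \<Longrightarrow> word_prod G xs \<in> carrier G"
  by (induction xs) (auto simp: word_prod_def)

lemma word_prod_append:
  "set xs \<subseteq> carrier G \<Longrightarrow> set ys \<subseteq> carrier G
    \<Longrightarrow> word_prod G (xs @ ys) = word_prod G xs \<otimes> word_prod G ys"
proof (induction xs)
  case Nil
  then show ?case
    using word_prod_closed by (simp add: word_prod_def)
next
  case (Cons x xs)
  then show ?case
    using word_prod_closed by (simp add: word_prod_def m_assoc)
qed

lemma one_in_word_ball: "\<one> \<in> word_ball G Y k"
  unfolding word_ball_def by (auto intro!: exI[of _ "[]"] simp: word_prod_def)

lemma word_ball_mono: "k \<le> l \<Longrightarrow> word_ball G Y k \<subseteq> word_ball G Y l"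
  unfolding word_ball_def by fastforce

lemma generator_in_word_ball: "y \<in> Y \<Longrightarrow> Y \<subseteq> carrier G \<Longrightarrow> y \<in> word_ball G Y 1"
  unfolding word_ball_def by (auto intro!: exI[of _ "[y]"] simp: word_prod_def)

lemma mult_in_word_ball:
  assumes "Y \<subseteq> carrier G" "g \<in> word_ball G Y m" "h \<in> word_ball G Y n"
  shows "g \<otimes> h \<in> word_ball G Y (m + n)"
proof -
  obtain xs ys where "set xs \<subseteq> Y" "length xs \<le> m" "g = word_prod G xs"
    "set ys \<subseteq> Y" "length ys \<le> n" "h = word_prod G ys"
    using assms(2,3) unfolding word_ball_def by blast
  then show ?thesis
    unfolding word_ball_def using assms(1)
    by (intro CollectI exI[of _ "xs @ ys"]) (auto simp: word_prod_append)
qed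

lemma pow_in_word_ball:
  assumes "y \<in> Y" "Y \<subseteq> carrier G"
  shows "y [^] n \<in> word_ball G Y n"
proof (induction n)
  case 0
  then show ?case
    by (simp add: one_in_word_ball)
next
  case (Suc n)
  then show ?case
    using mult_in_word_ball[OF assms(2) Suc generator_in_word_ball[OF assms]] by simp
qed

end

section \<open>Sums of sets modulo 2\<close>

lemma odd_card_sym_diff:
  assumes "finite A" "finite B"
  shows "odd (card (sym_diff A B)) \<longleftrightarrow> odd (card A) \<noteq> odd (card B)"
proof -
  have "card (sym_diff A B) = card (A - B) + card (B - A)"
    using assms by (intro card_Un_disjoint) auto
  moreover have "card A = card (A \<inter> B) + card (A - B)" "card B = card (B \<inter> A) + card (B - A)"
    using assms by (simp_all add: card_Int_Diff)
  ultimately show ?thesis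
    by (simp add: Int_commute) presburger
qed

definition xor_sum :: "('i \<Rightarrow> 'a set) \<Rightarrow> 'i set \<Rightarrow> 'a set" where
  "xor_sum f F = {j. odd (card {y \<in> F. j \<in> f y})}"

lemma xor_sum_empty [simp]: "xor_sum f {} = {}"
  by (simp add: xor_sum_def)

lemma xor_sum_singleton [simp]: "xor_sum f {y} = f y"
proof -
  have "{z \<in> {y}. j \<in> f z} = (if j \<in> f y then {y} else {})" for j
    by auto
  then show ?thesis
    by (auto simp: xor_sum_def)
qed

lemma xor_sum_sym_diff:
  assumes "finite A" "finite B"
  shows "xor_sum f (sym_diff A B) = sym_diff (xor_sum f A) (xor_sum f B)"
proof -
  have "{y \<in> sym_diff A B. j \<in> f y} = sym_diff {y \<in> A. j \<in> f y} {y \<in> B. j \<in> f y}" for j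
    by auto
  then show ?thesis
    using assms by (auto simp: xor_sum_def odd_card_sym_diff)
qed

lemma xor_sum_Un_disjoint:
  assumes "finite A" "finite B" "A \<inter> B = {}"
  shows "xor_sum f (A \<union> B) = sym_diff (xor_sum f A) (xor_sum f B)"
proof -
  have "A \<union> B = sym_diff A B"
    using assms(3) by blast
  then show ?thesis
    using xor_sum_sym_diff[OF assms(1,2)] by simp
qed

lemma xor_sum_insert:
  assumes "finite F" "y \<notin> F"
  shows "xor_sum f (insert y F) = sym_diff (f y) (xor_sum f F)"
  using xor_sum_Un_disjoint[of "{y}" F f] assms by simp

lemma xor_sum_subset:
  assumes "\<And>y. y \<in> F \<Longrightarrow> f y \<subseteq> S"
  shows "xor_sum f F \<subseteq> S"
proof
  fix j
  assume "j \<in> xor_sum f F"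
  then have "{y \<in> F. j \<in> f y} \<noteq> {}"
    unfolding xor_sum_def by (metis (no_types) card.empty even_zero mem_Collect_eq)
  then show "j \<in> S"
    using assms by blast
qed

lemma xor_sum_reindex:
  assumes "inj_on h F"
  shows "xor_sum f (h ` F) = xor_sum (f \<circ> h) F"
proof -
  have "card {y \<in> h ` F. j \<in> f y} = card {z \<in> F. j \<in> f (h z)}" for j
  proof -
    have "{y \<in> h ` F. j \<in> f y} = h ` {z \<in> F. j \<in> f (h z)}"
      by auto
    then show ?thesis
      using assms by (simp add: card_image inj_on_subset)
  qed
  then show ?thesis
    by (simp add: xor_sum_def)
qed

lemma image_xor_sum:
  assumes "inj_on h S" "\<And>y. y \<in> F \<Longrightarrow> f y \<subseteq> S"
  shows "h ` xor_sum f F = xor_sum (\<lambda>y. h ` f y) F"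
proof (rule Set.set_eqI)
  fix j
  show "j \<in> h ` xor_sum f F \<longleftrightarrow> j \<in> xor_sum (\<lambda>y. h ` f y) F"
  proof (cases "j \<in> h ` S")
    case True
    then obtain i where i: "i \<in> S" "j = h i"
      by blast
    have "{y \<in> F. h i \<in> h ` f y} = {y \<in> F. i \<in> f y}"
      using assms i(1) by (auto dest: inj_onD)
    moreover have "h i \<in> h ` xor_sum f F \<longleftrightarrow> i \<in> xor_sum f F"
      using assms i(1) xor_sum_subset[of F f S] by (auto dest: inj_onD)
    ultimately show ?thesis
      unfolding i(2) by (simp add: xor_sum_def)
  next
    case False
    have empty: "{y \<in> F. j \<in> h ` f y} = {}"
      using False assms(2) by blast
    have "j \<notin> xor_sum (\<lambda>y. h ` f y) F"
      unfolding xor_sum_def by (simp only: mem_Collect_eq empty) simp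
    moreover have "j \<notin> h ` xor_sum f F"
      using False xor_sum_subset[of F f S] assms(2) by blast
    ultimately show ?thesis
      by blast
  qed
qed

text \<open>By pigeonhole, more than \<open>card S\<close> summands contain two different subfamilies with the
  same sum, and their symmetric difference can be dropped.\<close>
lemma xor_sum_subfamily_card_le:
  assumes "finite F" "finite S" "\<And>y. y \<in> F \<Longrightarrow> f y \<subseteq> S"
  shows "\<exists>F' \<subseteq> F. card F' \<le> card S \<and> xor_sum f F' = xor_sum f F"
  using assms(1,3)
proof (induction "card F" arbitrary: F rule: less_induct)
  case less
  show ?case
  proof (cases "card F \<le> card S")
    case False
    have "\<not> inj_on (xor_sum f) (Pow F)"
    proof
      assume "inj_on (xor_sum f) (Pow F)"
      moreover have "xor_sum f ` Pow F \<subseteq> Pow S"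
        using less.prems(2) by (auto intro!: xor_sum_subset)
      ultimately have "card (Pow F) \<le> card (Pow S)"
        using assms(2) by (intro card_inj_on_le) auto
      then show False
        using False less.prems(1) assms(2) by (simp add: card_Pow)
    qed
    then obtain F1 F2 where F12: "F1 \<subseteq> F" "F2 \<subseteq> F" "F1 \<noteq> F2" "xor_sum f F1 = xor_sum f F2"
      unfolding inj_on_def by blast
    define D where "D = sym_diff F1 F2"
    have fin: "finite F1" "finite F2" "finite D"
      using F12(1,2) less.prems(1) finite_subset unfolding D_def by blast+
    have "xor_sum f D = {}"
      using xor_sum_sym_diff[OF fin(1,2), of f] F12(4) by (simp add: D_def)
    moreover have "F - D = sym_diff F D"
      using F12(1,2) by (auto simp: D_def)
    ultimately have "xor_sum f (F - D) = xor_sum f F"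
      using xor_sum_sym_diff[OF less.prems(1) fin(3), of f] by simp
    moreover have "D \<noteq> {}" "D \<subseteq> F"
      using F12(1-3) by (auto simp: D_def)
    then have "card (F - D) < card F"
      using less.prems(1) by (intro psubset_card_mono) auto
    then obtain F' where "F' \<subseteq> F - D" "card F' \<le> card S" "xor_sum f F' = xor_sum f (F - D)"
      using less.hyps[of "F - D"] less.prems by blast
    ultimately show ?thesis
      by auto
  qed blast
qed

lemma split_Times_lessThan_Suc:
  assumes "F \<subseteq> {0..<Suc m} \<times> A"
  shows "F = F \<inter> {0..<m} \<times> A \<union> Pair m ` {x. (m, x) \<in> F}"
    and "F \<inter> {0..<m} \<times> A \<inter> Pair m ` {x. (m, x) \<in> F} = {}"
proof -
  show "F = F \<inter> {0..<m} \<times> A \<union> Pair m ` {x. (m, x) \<in> F}"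
  proof
    show "F \<subseteq> F \<inter> {0..<m} \<times> A \<union> Pair m ` {x. (m, x) \<in> F}"
    proof
      fix y
      assume "y \<in> F"
      then obtain k x where "y = (k, x)" "k < Suc m" "x \<in> A"
        using assms by fastforce
      then show "y \<in> F \<inter> {0..<m} \<times> A \<union> Pair m ` {x. (m, x) \<in> F}"
        using \<open>y \<in> F\<close> by (cases "k = m") auto
    qed
  qed auto
qed auto

section \<open>The wreath product\<close>

lemma exists_mult_mod_eq:
  fixes a b p :: nat
  assumes "coprime a p" "b < p"
  shows "\<exists>k<p. k * a mod p = b"
proof -
  obtain k where "[a * k = b] (mod p)"
    using cong_solve_dvd_nat[of a p b] assms(1) by auto
  then have "k mod p * a mod p = b"
    using assms(2) by (simp add: cong_def mod_mult_left_eq mult.commute[of a])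
  moreover have "k mod p < p"
    using assms(2) by simp
  ultimately show ?thesis
    by blast
qed

lemma cshift_subset: "0 < p \<Longrightarrow> cshift p a B \<subseteq> {0..<p}"
  unfolding cshift_def by auto

lemma cshift_0: "B \<subseteq> {0..<p} \<Longrightarrow> cshift p 0 B = B"
  unfolding cshift_def by (force simp: image_iff)

lemma cshift_cshift: "cshift p a (cshift p b B) = cshift p (a + b) B"
proof -
  have "((i + b) mod p + a) mod p = (i + (a + b)) mod p" for i
    by (metis add.assoc add.commute mod_add_left_eq)
  then show ?thesis
    unfolding cshift_def image_image by simp
qed

lemma cshift_cong_mod:
  assumes "a mod p = b mod p"
  shows "cshift p a B = cshift p b B"
proof -
  have "(i + a) mod p = (i + b) mod p" for i
    using assms by (metis mod_add_right_eq)
  then show ?thesis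
    unfolding cshift_def by simp
qed

lemma cshift_mod [simp]: "cshift p (a mod p) B = cshift p a B"
  by (rule cshift_cong_mod) simp

lemma cshift_singleton [simp]: "cshift p a {i} = {(i + a) mod p}"
  unfolding cshift_def by simp

lemma inj_on_add_mod: "inj_on (\<lambda>i. (i + a) mod p) {0..<p :: nat}"
proof (rule inj_onI)
  fix i j :: nat
  assume "i \<in> {0..<p}" "j \<in> {0..<p}" "(i + a) mod p = (j + a) mod p"
  then show "i = j"
    using cong_add_rcancel_nat[of i a j p] by (simp add: cong_def)
qed

lemma cshift_sym_diff:
  assumes "A \<subseteq> {0..<p}" "B \<subseteq> {0..<p}"
  shows "cshift p a (sym_diff A B) = sym_diff (cshift p a A) (cshift p a B)"
  unfolding cshift_def image_Un
  using assms inj_on_image_set_diff[OF inj_on_add_mod[of a p], of A B]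
    inj_on_image_set_diff[OF inj_on_add_mod[of a p], of B A]
  by auto

lemma card_cshift: "B \<subseteq> {0..<p} \<Longrightarrow> card (cshift p a B) = card B"
  unfolding cshift_def by (rule card_image) (rule inj_on_subset[OF inj_on_add_mod])

lemma wreath_carrier_iff: "x \<in> carrier (wreath p) \<longleftrightarrow> fst x \<subseteq> {0..<p} \<and> snd x < p"
  by (simp add: wreath_def)

lemma wreath_mult_eq:
  "x \<otimes>\<^bsub>wreath p\<^esub> y = (sym_diff (fst x) (cshift p (snd x) (fst y)), (snd x + snd y) mod p)"
  by (simp add: wreath_def wreath_mult_def Let_def)

lemma wreath_one_eq: "\<one>\<^bsub>wreath p\<^esub> = ({}, 0)"
  by (simp add: wreath_def)

lemma finite_carrier_wreath: "finite (carrier (wreath p))"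
proof (rule finite_subset)
  show "carrier (wreath p) \<subseteq> Pow {0..<p} \<times> {0..<p}"
    by (auto simp: wreath_carrier_iff mem_Times_iff subset_iff)
qed simp

lemma group_wreath:
  assumes "0 < p"
  shows "group (wreath p)"
proof (rule groupI)
  fix x y
  assume "x \<in> carrier (wreath p)" "y \<in> carrier (wreath p)"
  then show "x \<otimes>\<^bsub>wreath p\<^esub> y \<in> carrier (wreath p)"
    using cshift_subset[OF assms, of "snd x" "fst y"]
    by (auto simp: wreath_carrier_iff wreath_mult_eq)
next
  show "\<one>\<^bsub>wreath p\<^esub> \<in> carrier (wreath p)"
    using assms by (simp add: wreath_carrier_iff wreath_one_eq)
next
  fix x y z
  assume "x \<in> carrier (wreath p)" "y \<in> carrier (wreath p)" "z \<in> carrier (wreath p)"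
  then have "cshift p (snd x) (sym_diff (fst y) (cshift p (snd y) (fst z)))
      = sym_diff (cshift p (snd x) (fst y)) (cshift p ((snd x + snd y) mod p) (fst z))"
    using assms by (simp add: wreath_carrier_iff cshift_sym_diff cshift_subset cshift_cshift)
  moreover have "sym_diff (sym_diff A B) C = sym_diff A (sym_diff B C)" for A B C :: "nat set"
    by blast
  moreover have "((snd x + snd y) mod p + snd z) mod p = (snd x + (snd y + snd z) mod p) mod p"
    by (simp add: mod_add_left_eq mod_add_right_eq add.assoc)
  ultimately show "x \<otimes>\<^bsub>wreath p\<^esub> y \<otimes>\<^bsub>wreath p\<^esub> z = x \<otimes>\<^bsub>wreath p\<^esub> (y \<otimes>\<^bsub>wreath p\<^esub> z)"
    by (simp add: wreath_mult_eq)
next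
  fix x
  assume "x \<in> carrier (wreath p)"
  then show "\<one>\<^bsub>wreath p\<^esub> \<otimes>\<^bsub>wreath p\<^esub> x = x"
    by (simp add: wreath_carrier_iff wreath_mult_eq wreath_one_eq cshift_0)
next
  fix x
  assume x: "x \<in> carrier (wreath p)"
  let ?y = "(cshift p (p - snd x) (fst x), (p - snd x) mod p)"
  have "?y \<in> carrier (wreath p)"
    using assms by (simp add: wreath_carrier_iff cshift_subset)
  moreover have "?y \<otimes>\<^bsub>wreath p\<^esub> x = \<one>\<^bsub>wreath p\<^esub>"
    using x by (simp add: wreath_carrier_iff wreath_mult_eq wreath_one_eq mod_add_left_eq)
  ultimately show "\<exists>y\<in>carrier (wreath p). y \<otimes>\<^bsub>wreath p\<^esub> x = \<one>\<^bsub>wreath p\<^esub>"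
    by blast
qed

definition vec :: "nat set \<Rightarrow> nat set \<times> nat" where
  "vec B = (B, 0)"

definition odd_weight :: "nat set \<times> nat \<Rightarrow> bool" where
  "odd_weight x \<longleftrightarrow> odd (card (fst x))"

lemma snd_pow: "snd (x [^]\<^bsub>wreath p\<^esub> (n::nat)) = n * snd x mod p"
  by (induction n) (simp_all add: wreath_one_eq wreath_mult_eq mod_add_right_eq add.commute)

lemma vec_empty: "vec {} = \<one>\<^bsub>wreath p\<^esub>"
  by (simp add: vec_def wreath_one_eq)

lemma vec_fst: "snd x = 0 \<Longrightarrow> vec (fst x) = x"
  by (simp add: vec_def prod_eq_iff)

lemma vec_mult_vec: "C \<subseteq> {0..<p} \<Longrightarrow> vec B \<otimes>\<^bsub>wreath p\<^esub> vec C = vec (sym_diff B C)"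
  by (simp add: vec_def wreath_mult_eq cshift_0)

lemma vec_mult_vec_self: "B \<subseteq> {0..<p} \<Longrightarrow> vec B \<otimes>\<^bsub>wreath p\<^esub> vec B = \<one>\<^bsub>wreath p\<^esub>"
  by (simp add: vec_mult_vec vec_empty)

lemma mult_vec_commute:
  assumes "g \<in> carrier (wreath p)" "D \<subseteq> {0..<p}"
  shows "g \<otimes>\<^bsub>wreath p\<^esub> vec D = vec (cshift p (snd g) D) \<otimes>\<^bsub>wreath p\<^esub> g"
  using assms by (auto simp: vec_def wreath_carrier_iff wreath_mult_eq cshift_0)

lemma odd_weight_mult:
  assumes "x \<in> carrier (wreath p)" "y \<in> carrier (wreath p)"
  shows "odd_weight (x \<otimes>\<^bsub>wreath p\<^esub> y) \<longleftrightarrow> odd_weight x \<noteq> odd_weight y"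
proof -
  have "finite (fst x)" "finite (fst y)" "fst y \<subseteq> {0..<p}"
    using assms finite_subset by (auto simp: wreath_carrier_iff)
  moreover have "finite (cshift p (snd x) (fst y))"
    using \<open>finite (fst y)\<close> by (simp add: cshift_def)
  ultimately show ?thesis
    by (simp add: odd_weight_def wreath_mult_eq odd_card_sym_diff card_cshift)
qed

context
  fixes p :: nat
  assumes p_pos: "0 < p"
begin

interpretation W: group "wreath p"
  using group_wreath[OF p_pos] .

lemma wreath_inv_eq:
  assumes "x \<in> carrier (wreath p)"
  shows "inv\<^bsub>wreath p\<^esub> x = (cshift p (p - snd x) (fst x), (p - snd x) mod p)"
  using assms p_pos
  by (intro W.inv_equality)
    (auto simp: wreath_carrier_iff wreath_mult_eq wreath_one_eq cshift_subset mod_add_left_eq)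

lemma snd_mult_inv_eq_0:
  assumes "x \<in> carrier (wreath p)" "y \<in> carrier (wreath p)" "snd x = snd y"
  shows "snd (x \<otimes>\<^bsub>wreath p\<^esub> inv\<^bsub>wreath p\<^esub> y) = 0"
proof -
  have "snd (x \<otimes>\<^bsub>wreath p\<^esub> inv\<^bsub>wreath p\<^esub> y) = snd (y \<otimes>\<^bsub>wreath p\<^esub> inv\<^bsub>wreath p\<^esub> y)"
    using assms(3) by (simp add: wreath_mult_eq)
  then show ?thesis
    using assms(2) by (simp add: wreath_one_eq)
qed

lemma vec_in_carrier: "B \<subseteq> {0..<p} \<Longrightarrow> vec B \<in> carrier (wreath p)"
  using p_pos by (simp add: vec_def wreath_carrier_iff)

lemma conj_vec:
  assumes "g \<in> carrier (wreath p)" "D \<subseteq> {0..<p}"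
  shows "g \<otimes>\<^bsub>wreath p\<^esub> vec D \<otimes>\<^bsub>wreath p\<^esub> inv\<^bsub>wreath p\<^esub> g = vec (cshift p (snd g) D)"
  using assms by (simp add: mult_vec_commute W.m_assoc vec_in_carrier cshift_subset p_pos)

lemma inv_vec: "B \<subseteq> {0..<p} \<Longrightarrow> inv\<^bsub>wreath p\<^esub> (vec B) = vec B"
  using vec_mult_vec_self vec_in_carrier by (simp add: W.inv_equality)

lemma odd_weight_pow:
  "x \<in> carrier (wreath p) \<Longrightarrow> odd_weight (x [^]\<^bsub>wreath p\<^esub> (n::nat)) \<longleftrightarrow> odd n \<and> odd_weight x"
proof (induction n)
  case 0
  then show ?case
    by (simp add: odd_weight_def wreath_one_eq)
next
  case (Suc n)
  then show ?case
    by (auto simp: odd_weight_mult)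
qed

lemma subgroup_base: "subgroup {x \<in> carrier (wreath p). snd x = 0} (wreath p)"
  by (rule W.subgroupI)
    (auto simp: wreath_carrier_iff wreath_mult_eq wreath_inv_eq cshift_0 cshift_subset p_pos
      intro: exI[of _ "{}"])

lemma subgroup_even_weight: "subgroup {x \<in> carrier (wreath p). \<not> odd_weight x} (wreath p)"
proof (rule W.subgroupI)
  show "{x \<in> carrier (wreath p). \<not> odd_weight x} \<noteq> {}"
    using W.one_closed by (auto simp: odd_weight_def wreath_one_eq)
next
  fix x
  assume "x \<in> {x \<in> carrier (wreath p). \<not> odd_weight x}"
  then show "inv\<^bsub>wreath p\<^esub> x \<in> {x \<in> carrier (wreath p). \<not> odd_weight x}"
    using odd_weight_mult[where p = p and x = x and y = "inv\<^bsub>wreath p\<^esub> x"]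
    by (simp add: odd_weight_def wreath_one_eq)
qed (auto simp: odd_weight_mult)

end

section \<open>Generating sets of the wreath product\<close>

locale wreath_generating_set =
  fixes p :: nat and X :: "(nat set \<times> nat) set" and t :: "nat set \<times> nat"
  assumes prime_p: "prime p" and odd_p: "odd p"
    and X_subset: "X \<subseteq> carrier (wreath p)"
    and generate_X: "generate (wreath p) X = carrier (wreath p)"
    and t_in_X: "t \<in> X" and snd_t_nonzero: "snd t \<noteq> 0"
begin

abbreviation W :: "(nat set \<times> nat) monoid" where
  "W \<equiv> wreath p"

abbreviation ball :: "nat \<Rightarrow> (nat set \<times> nat) set" where
  "ball k \<equiv> word_ball W (X \<union> (\<lambda>x. inv\<^bsub>W\<^esub> x) ` X) k"

lemma p_pos: "0 < p"
  using prime_p prime_gt_0_nat by blast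

sublocale W: group W
  using group_wreath[OF p_pos] .

lemma t_in_carrier: "t \<in> carrier W"
  using t_in_X X_subset by blast

lemma letters_subset: "X \<union> (\<lambda>x. inv\<^bsub>W\<^esub> x) ` X \<subseteq> carrier W"
  using X_subset by auto

lemma mult_in_ball: "g \<in> ball m \<Longrightarrow> h \<in> ball n \<Longrightarrow> g \<otimes>\<^bsub>W\<^esub> h \<in> ball (m + n)"
  by (rule W.mult_in_word_ball[OF letters_subset])

lemma in_ball_mono: "g \<in> ball m \<Longrightarrow> m \<le> n \<Longrightarrow> g \<in> ball n"
  using W.word_ball_mono by blast

lemma gen_in_ball: "x \<in> X \<Longrightarrow> x \<in> ball 1"
  by (rule W.generator_in_word_ball[OF _ letters_subset]) simp

lemma inv_gen_in_ball: "x \<in> X \<Longrightarrow> inv\<^bsub>W\<^esub> x \<in> ball 1"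
  by (rule W.generator_in_word_ball[OF _ letters_subset]) simp

lemma t_pow_in_ball: "t [^]\<^bsub>W\<^esub> (k::nat) \<in> ball k"
  by (rule W.pow_in_word_ball[OF _ letters_subset]) (simp add: t_in_X)

lemma inv_t_pow_in_ball: "inv\<^bsub>W\<^esub> (t [^]\<^bsub>W\<^esub> (k::nat)) \<in> ball k"
  using W.pow_in_word_ball[OF _ letters_subset, of "inv\<^bsub>W\<^esub> t" k] t_in_X t_in_carrier
  by (simp add: W.nat_pow_inv)

lemma snd_t_less: "snd t < p"
  using t_in_carrier by (simp add: wreath_carrier_iff)

lemma coprime_snd_t: "coprime (snd t) p"
proof -
  have "\<not> p dvd snd t"
    using snd_t_nonzero snd_t_less by (auto dest: dvd_imp_le)
  then show ?thesis
    using prime_p by (simp add: prime_imp_coprime coprime_commute)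
qed

lemma decompose_vec_mult_t_pow:
  assumes "g \<in> carrier W"
  obtains B k where "B \<subseteq> {0..<p}" "k < p" "g = vec B \<otimes>\<^bsub>W\<^esub> t [^]\<^bsub>W\<^esub> k"
proof -
  obtain k where k: "k < p" "k * snd t mod p = snd g"
    using exists_mult_mod_eq[OF coprime_snd_t] assms by (auto simp: wreath_carrier_iff)
  define u where "u = g \<otimes>\<^bsub>W\<^esub> inv\<^bsub>W\<^esub> (t [^]\<^bsub>W\<^esub> k)"
  have u: "u \<in> carrier W"
    using assms t_in_carrier by (simp add: u_def)
  have "snd u = 0"
    unfolding u_def using assms t_in_carrier k(2)
    by (intro snd_mult_inv_eq_0[OF p_pos]) (simp_all add: snd_pow)
  then have "vec (fst u) \<otimes>\<^bsub>W\<^esub> t [^]\<^bsub>W\<^esub> k = u \<otimes>\<^bsub>W\<^esub> t [^]\<^bsub>W\<^esub> k"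
    by (simp add: vec_fst)
  also have "\<dots> = g"
    using assms t_in_carrier by (simp add: u_def W.m_assoc)
  finally have "g = vec (fst u) \<otimes>\<^bsub>W\<^esub> t [^]\<^bsub>W\<^esub> k" ..
  moreover have "fst u \<subseteq> {0..<p}"
    using u by (simp add: wreath_carrier_iff)
  ultimately show ?thesis
    using that k(1) by blast
qed

definition commutator :: "nat set \<times> nat \<Rightarrow> nat set \<times> nat" where
  "commutator g = t \<otimes>\<^bsub>W\<^esub> g \<otimes>\<^bsub>W\<^esub> inv\<^bsub>W\<^esub> t \<otimes>\<^bsub>W\<^esub> inv\<^bsub>W\<^esub> g"

definition comm_vec :: "nat set \<times> nat \<Rightarrow> nat set" where
  "comm_vec g = fst (commutator g)"

lemma commutator_eq_vec:
  assumes "g \<in> carrier W"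
  shows "commutator g = vec (comm_vec g)"
proof -
  have "commutator g = (t \<otimes>\<^bsub>W\<^esub> g) \<otimes>\<^bsub>W\<^esub> inv\<^bsub>W\<^esub> (g \<otimes>\<^bsub>W\<^esub> t)"
    using assms t_in_carrier by (simp add: commutator_def W.inv_mult_group W.m_assoc)
  moreover have "snd (t \<otimes>\<^bsub>W\<^esub> g) = snd (g \<otimes>\<^bsub>W\<^esub> t)"
    by (simp add: wreath_mult_eq add.commute)
  ultimately have "snd (commutator g) = 0"
    using assms t_in_carrier by (simp add: snd_mult_inv_eq_0[OF p_pos])
  then show ?thesis
    by (simp add: comm_vec_def vec_fst)
qed

lemma comm_vec_subset:
  assumes "g \<in> carrier W"
  shows "comm_vec g \<subseteq> {0..<p}"
proof -
  have "commutator g \<in> carrier W"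
    using assms t_in_carrier by (simp add: commutator_def)
  then show ?thesis
    by (simp add: comm_vec_def wreath_carrier_iff)
qed

lemma comm_vec_mult:
  assumes "g \<in> carrier W" "h \<in> carrier W"
  shows "comm_vec (g \<otimes>\<^bsub>W\<^esub> h) = sym_diff (comm_vec g) (cshift p (snd g) (comm_vec h))"
proof -
  have "commutator (g \<otimes>\<^bsub>W\<^esub> h) = commutator g \<otimes>\<^bsub>W\<^esub> (g \<otimes>\<^bsub>W\<^esub> commutator h \<otimes>\<^bsub>W\<^esub> inv\<^bsub>W\<^esub> g)"
    unfolding commutator_def using t_in_carrier assms by (rule W.commutator_mult)
  also have "\<dots> = vec (comm_vec g) \<otimes>\<^bsub>W\<^esub> vec (cshift p (snd g) (comm_vec h))"
    using assms by (simp add: commutator_eq_vec conj_vec[OF p_pos] comm_vec_subset)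
  also have "\<dots> = vec (sym_diff (comm_vec g) (cshift p (snd g) (comm_vec h)))"
    by (simp add: vec_mult_vec cshift_subset[OF p_pos])
  finally show ?thesis
    by (simp add: comm_vec_def vec_def)
qed

lemma comm_vec_inv:
  assumes "h \<in> carrier W"
  shows "comm_vec (inv\<^bsub>W\<^esub> h) = cshift p (snd (inv\<^bsub>W\<^esub> h)) (comm_vec h)"
proof -
  have "commutator (inv\<^bsub>W\<^esub> h) = inv\<^bsub>W\<^esub> h \<otimes>\<^bsub>W\<^esub> inv\<^bsub>W\<^esub> (commutator h) \<otimes>\<^bsub>W\<^esub> h"
    unfolding commutator_def using t_in_carrier assms by (rule W.commutator_inv)
  also have "\<dots> = inv\<^bsub>W\<^esub> h \<otimes>\<^bsub>W\<^esub> vec (comm_vec h) \<otimes>\<^bsub>W\<^esub> inv\<^bsub>W\<^esub> (inv\<^bsub>W\<^esub> h)"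
    using assms by (simp add: commutator_eq_vec inv_vec[OF p_pos] comm_vec_subset)
  also have "\<dots> = vec (cshift p (snd (inv\<^bsub>W\<^esub> h)) (comm_vec h))"
    using assms by (intro conj_vec[OF p_pos]) (simp_all add: comm_vec_subset)
  finally show ?thesis
    by (simp add: comm_vec_def vec_def)
qed

lemma comm_vec_of_vec_0: "comm_vec (vec {0}) = sym_diff {snd t} {0}"
proof -
  have "commutator (vec {0}) = (t \<otimes>\<^bsub>W\<^esub> vec {0} \<otimes>\<^bsub>W\<^esub> inv\<^bsub>W\<^esub> t) \<otimes>\<^bsub>W\<^esub> inv\<^bsub>W\<^esub> (vec {0})"
    by (simp add: commutator_def)
  also have "\<dots> = vec {snd t} \<otimes>\<^bsub>W\<^esub> vec {0}"
    using t_in_carrier p_pos by (simp add: conj_vec inv_vec wreath_carrier_iff)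
  also have "\<dots> = vec (sym_diff {snd t} {0})"
    using p_pos by (simp add: vec_mult_vec)
  finally show ?thesis
    by (simp add: comm_vec_def vec_def)
qed

definition shifted_comm_vec :: "nat \<times> (nat set \<times> nat) \<Rightarrow> nat set" where
  "shifted_comm_vec y = cshift p (fst y * snd t) (comm_vec (snd y))"

text \<open>Conjugation by \<open>t\<^sup>k\<close> shifts the base by \<open>k * snd t\<close>, so this is the
  \<open>\<bbbF>\<^sub>2[C\<^sub>p]\<close>-submodule of the base spanned by the commutators \<open>[t, x]\<close>, \<open>x \<in> X\<close>.\<close>
definition comm_module :: "nat set set" where
  "comm_module = {xor_sum shifted_comm_vec F | F. F \<subseteq> {0..<p} \<times> X}"

lemma finite_X: "finite X"
  using finite_subset[OF X_subset finite_carrier_wreath] .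

lemma shifted_comm_vec_subset: "shifted_comm_vec y \<subseteq> {0..<p}"
  by (simp add: shifted_comm_vec_def cshift_subset[OF p_pos])

lemma finite_index_subset: "F \<subseteq> {0..<p} \<times> X \<Longrightarrow> finite F"
  using finite_X by (auto intro: finite_subset)

lemma comm_module_subset: "u \<in> comm_module \<Longrightarrow> u \<subseteq> {0..<p}"
  unfolding comm_module_def
  by (auto intro: xor_sum_subset[OF shifted_comm_vec_subset, THEN subsetD])

lemma empty_in_comm_module: "{} \<in> comm_module"
  unfolding comm_module_def by (auto intro!: exI[of _ "{}"])

lemma sym_diff_in_comm_module:
  assumes "u \<in> comm_module" "v \<in> comm_module"
  shows "sym_diff u v \<in> comm_module"
proof -
  obtain F G where FG: "F \<subseteq> {0..<p} \<times> X" "G \<subseteq> {0..<p} \<times> X"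
    "u = xor_sum shifted_comm_vec F" "v = xor_sum shifted_comm_vec G"
    using assms unfolding comm_module_def by blast
  then have "sym_diff u v = xor_sum shifted_comm_vec (sym_diff F G)"
    by (simp add: xor_sum_sym_diff finite_index_subset)
  moreover have "sym_diff F G \<subseteq> {0..<p} \<times> X"
    using FG(1,2) by blast
  ultimately show ?thesis
    unfolding comm_module_def by blast
qed

lemma cshift_shifted_comm_vec:
  assumes "c * snd t mod p = b mod p"
  shows "cshift p b (shifted_comm_vec y) = shifted_comm_vec ((fst y + c) mod p, snd y)"
proof -
  have "(b + fst y * snd t) mod p = (b mod p + fst y * snd t) mod p"
    by (simp add: mod_add_left_eq)
  also have "\<dots> = (c * snd t + fst y * snd t) mod p"
    by (simp add: assms[symmetric] mod_add_left_eq)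
  also have "\<dots> = ((fst y + c) mod p * snd t) mod p"
    by (simp add: distrib_right mod_mult_left_eq add.commute)
  finally have "cshift p (b + fst y * snd t) B = cshift p ((fst y + c) mod p * snd t) B" for B
    by (rule cshift_cong_mod)
  then show ?thesis
    by (simp add: shifted_comm_vec_def cshift_cshift)
qed

lemma cshift_in_comm_module:
  assumes "u \<in> comm_module"
  shows "cshift p b u \<in> comm_module"
proof -
  obtain F where F: "F \<subseteq> {0..<p} \<times> X" "u = xor_sum shifted_comm_vec F"
    using assms unfolding comm_module_def by blast
  obtain c where c: "c * snd t mod p = b mod p"
    using exists_mult_mod_eq[OF coprime_snd_t, of "b mod p"] p_pos by auto
  define h where "h = map_prod (\<lambda>k. (k + c) mod p) (id :: nat set \<times> nat \<Rightarrow> _)"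
  have "inj_on h F"
    unfolding h_def using inj_on_add_mod[of c p] F(1)
    by (auto intro: inj_on_subset[OF map_prod_inj_on])
  have "cshift p b u = xor_sum (\<lambda>y. cshift p b (shifted_comm_vec y)) F"
    unfolding F(2) cshift_def
    by (rule image_xor_sum[OF inj_on_add_mod]) (rule shifted_comm_vec_subset)
  also have "\<dots> = xor_sum (shifted_comm_vec \<circ> h) F"
    using cshift_shifted_comm_vec[OF c] by (simp add: h_def comp_def map_prod_def split_beta)
  also have "\<dots> = xor_sum shifted_comm_vec (h ` F)"
    by (rule xor_sum_reindex[symmetric]) fact
  finally have "cshift p b u = xor_sum shifted_comm_vec (h ` F)" .
  moreover have "h ` F \<subseteq> {0..<p} \<times> X"
    using F(1) p_pos by (auto simp: h_def)
  ultimately show ?thesis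
    unfolding comm_module_def by blast
qed

lemma comm_vec_gen_in_comm_module:
  assumes "x \<in> X"
  shows "comm_vec x \<in> comm_module"
proof -
  have "comm_vec x = xor_sum shifted_comm_vec {(0, x)}"
    using assms X_subset by (auto simp: shifted_comm_vec_def cshift_0 comm_vec_subset)
  moreover have "{(0, x)} \<subseteq> {0..<p} \<times> X"
    using assms p_pos by simp
  ultimately show ?thesis
    unfolding comm_module_def by blast
qed

lemma comm_vec_in_comm_module:
  assumes "g \<in> carrier W"
  shows "comm_vec g \<in> comm_module"
proof -
  have "g \<in> generate W X"
    using assms generate_X by simp
  then show ?thesis
  proof (induction g rule: generate.induct)
    case one
    have "commutator \<one>\<^bsub>W\<^esub> = \<one>\<^bsub>W\<^esub>"
      using t_in_carrier by (simp add: commutator_def)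
    then show ?case
      by (simp add: comm_vec_def wreath_one_eq empty_in_comm_module)
  next
    case (incl h)
    then show ?case
      by (rule comm_vec_gen_in_comm_module)
  next
    case (inv h)
    then have "h \<in> carrier W"
      using X_subset by blast
    then show ?case
      using inv by (simp add: comm_vec_inv cshift_in_comm_module comm_vec_gen_in_comm_module)
  next
    case (eng g h)
    then have "g \<in> carrier W" "h \<in> carrier W"
      using W.generate_in_carrier[OF X_subset] by auto
    then show ?case
      using eng.IH by (simp add: comm_vec_mult sym_diff_in_comm_module cshift_in_comm_module)
  qed
qed

lemma pair_in_comm_module:
  assumes "j < p"
  shows "sym_diff {0} {j} \<in> comm_module"
proof -
  have "sym_diff {0} {k * snd t mod p} \<in> comm_module" for k
  proof (induction k)
    case 0
    then show ?case
      by (simp add: empty_in_comm_module)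
  next
    case (Suc k)
    have "vec {0} \<in> carrier W"
      using p_pos by (simp add: vec_in_carrier)
    then have "cshift p (k * snd t) (sym_diff {snd t} {0}) \<in> comm_module"
      using comm_vec_in_comm_module comm_vec_of_vec_0 cshift_in_comm_module by metis
    moreover have "cshift p (k * snd t) (sym_diff {snd t} {0})
        = sym_diff {Suc k * snd t mod p} {k * snd t mod p}"
      using p_pos snd_t_less by (simp add: cshift_sym_diff add.commute)
    moreover have "sym_diff A C = sym_diff (sym_diff A B) (sym_diff C B)" for A B C :: "nat set"
      by blast
    ultimately show ?case
      using sym_diff_in_comm_module[OF Suc.IH] by metis
  qed
  moreover obtain k where "k * snd t mod p = j"
    using exists_mult_mod_eq[OF coprime_snd_t assms] by blast
  ultimately show ?thesis
    by blast
qed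

lemma even_in_comm_module:
  assumes "B \<subseteq> {0..<p}" "even (card B)"
  shows "B \<in> comm_module"
proof -
  have "finite B"
    using assms(1) finite_subset by blast
  then have "(if even (card B) then B else sym_diff B {0}) \<in> comm_module"
    using assms(1)
  proof (induction B rule: finite_induct)
    case empty
    then show ?case
      by (simp add: empty_in_comm_module)
  next
    case (insert e B)
    have "sym_diff {0} {e} \<in> comm_module"
      using insert.prems by (simp add: pair_in_comm_module)
    moreover have "(if even (card B) then B else sym_diff B {0}) \<in> comm_module"
      using insert by simp
    moreover have "sym_diff (insert e B) {0} = sym_diff B (sym_diff {0} {e})"
      "insert e B = sym_diff (sym_diff B {0}) (sym_diff {0} {e})"
      using insert.hyps(2) by blast+
    moreover have "card (insert e B) = Suc (card B)"
      using insert.hyps by simp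
    ultimately show ?case
      by (cases "even (card B)") (simp_all add: sym_diff_in_comm_module)
  qed
  then show ?thesis
    using assms(2) by simp
qed

lemma commutator_gen_in_ball:
  assumes "x \<in> X"
  shows "commutator x \<in> ball 4"
proof -
  have "commutator x \<in> ball (1 + 1 + 1 + 1)"
    unfolding commutator_def using assms t_in_X
    by (intro mult_in_ball gen_in_ball inv_gen_in_ball)
  then show ?thesis
    by (simp add: numeral_eq_Suc)
qed

lemma xor_sum_comm_vec_subset: "S \<subseteq> X \<Longrightarrow> xor_sum comm_vec S \<subseteq> {0..<p}"
  using X_subset comm_vec_subset by (intro xor_sum_subset) blast

lemma vec_xor_sum_comm_vec_in_ball:
  assumes "finite S" "S \<subseteq> X"
  shows "vec (xor_sum comm_vec S) \<in> ball (4 * card S)"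
  using assms
proof (induction S rule: finite_induct)
  case empty
  then show ?case
    by (simp add: vec_empty[of p] W.one_in_word_ball)
next
  case (insert x S)
  have "x \<in> carrier W"
    using insert.prems X_subset by blast
  have "xor_sum comm_vec S \<subseteq> {0..<p}"
    using insert.prems by (simp add: xor_sum_comm_vec_subset)
  then have "vec (xor_sum comm_vec (insert x S)) = commutator x \<otimes>\<^bsub>W\<^esub> vec (xor_sum comm_vec S)"
    using insert.hyps \<open>x \<in> carrier W\<close> by (simp add: xor_sum_insert vec_mult_vec commutator_eq_vec)
  moreover have "commutator x \<otimes>\<^bsub>W\<^esub> vec (xor_sum comm_vec S) \<in> ball (4 + 4 * card S)"
    using insert by (intro mult_in_ball commutator_gen_in_ball) auto
  ultimately show ?case
    using insert.hyps by simp
qed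

lemma xor_sum_shifted_comm_vec_layer:
  assumes "S \<subseteq> X"
  shows "xor_sum shifted_comm_vec (Pair m ` S) = cshift p (m * snd t) (xor_sum comm_vec S)"
proof -
  have "xor_sum shifted_comm_vec (Pair m ` S) = xor_sum (\<lambda>x. cshift p (m * snd t) (comm_vec x)) S"
    by (simp add: xor_sum_reindex inj_on_def comp_def shifted_comm_vec_def)
  also have "\<dots> = cshift p (m * snd t) (xor_sum comm_vec S)"
    unfolding cshift_def using assms X_subset comm_vec_subset
    by (intro image_xor_sum[OF inj_on_add_mod, symmetric]) blast
  finally show ?thesis .
qed

lemma vec_sym_diff_mult_t_pow_Suc:
  assumes "E \<subseteq> {0..<p}" "D \<subseteq> {0..<p}"
  shows "vec (sym_diff E (cshift p (m * snd t) D)) \<otimes>\<^bsub>W\<^esub> t [^]\<^bsub>W\<^esub> Suc m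
    = vec E \<otimes>\<^bsub>W\<^esub> t [^]\<^bsub>W\<^esub> m \<otimes>\<^bsub>W\<^esub> vec D \<otimes>\<^bsub>W\<^esub> t"
proof -
  have carrier: "vec E \<in> carrier W" "vec D \<in> carrier W" "vec (cshift p (m * snd t) D) \<in> carrier W"
    using assms by (simp_all add: vec_in_carrier[OF p_pos] cshift_subset[OF p_pos])
  have "vec (sym_diff E (cshift p (m * snd t) D)) = vec E \<otimes>\<^bsub>W\<^esub> vec (cshift p (m * snd t) D)"
    by (rule vec_mult_vec[symmetric]) (rule cshift_subset[OF p_pos])
  then have "vec (sym_diff E (cshift p (m * snd t) D)) \<otimes>\<^bsub>W\<^esub> t [^]\<^bsub>W\<^esub> Suc m
      = vec E \<otimes>\<^bsub>W\<^esub> (vec (cshift p (m * snd t) D) \<otimes>\<^bsub>W\<^esub> t [^]\<^bsub>W\<^esub> m) \<otimes>\<^bsub>W\<^esub> t"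
    using carrier t_in_carrier by (simp add: W.m_assoc)
  also have "vec (cshift p (m * snd t) D) \<otimes>\<^bsub>W\<^esub> t [^]\<^bsub>W\<^esub> m = t [^]\<^bsub>W\<^esub> m \<otimes>\<^bsub>W\<^esub> vec D"
    using mult_vec_commute[of "t [^]\<^bsub>W\<^esub> m" p D] assms(2) t_in_carrier by (simp add: snd_pow)
  finally show ?thesis
    using carrier t_in_carrier by (simp add: W.m_assoc)
qed

text \<open>Grouping the summands by the power of \<open>t\<close> that conjugates them gives a word
  \<open>P\<^sub>0 t P\<^sub>1 t \<dots> P\<^sub>m\<^sub>-\<^sub>1 t\<close> where each \<open>P\<^sub>k\<close> is a product of commutators \<open>[t, x]\<close>.\<close>
lemma vec_xor_sum_mult_t_pow_in_ball:
  assumes "F \<subseteq> {0..<m} \<times> X"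
  shows "vec (xor_sum shifted_comm_vec F) \<otimes>\<^bsub>W\<^esub> t [^]\<^bsub>W\<^esub> m \<in> ball (m + 4 * card F)"
  using assms
proof (induction m arbitrary: F)
  case 0
  then show ?case
    by (simp add: vec_empty[of p] W.one_in_word_ball)
next
  case (Suc m)
  define F' where "F' = F \<inter> {0..<m} \<times> X"
  define S where "S = {x. (m, x) \<in> F}"
  have F_split: "F = F' \<union> Pair m ` S" "F' \<inter> Pair m ` S = {}"
    unfolding F'_def S_def by (fact split_Times_lessThan_Suc[OF Suc.prems])+
  have fin: "finite F'" "finite S" and "S \<subseteq> X"
    using Suc.prems finite_X by (auto simp: F'_def S_def intro: finite_subset)
  define E where "E = xor_sum shifted_comm_vec F'"
  define D where "D = xor_sum comm_vec S"
  have "xor_sum shifted_comm_vec F = sym_diff E (cshift p (m * snd t) D)"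
    unfolding E_def D_def using fin F_split \<open>S \<subseteq> X\<close>
    by (simp add: xor_sum_Un_disjoint xor_sum_shifted_comm_vec_layer)
  moreover have "E \<subseteq> {0..<p}" "D \<subseteq> {0..<p}"
    unfolding E_def D_def using \<open>S \<subseteq> X\<close>
    by (simp_all add: xor_sum_subset shifted_comm_vec_subset xor_sum_comm_vec_subset)
  ultimately have "vec (xor_sum shifted_comm_vec F) \<otimes>\<^bsub>W\<^esub> t [^]\<^bsub>W\<^esub> Suc m
      = vec E \<otimes>\<^bsub>W\<^esub> t [^]\<^bsub>W\<^esub> m \<otimes>\<^bsub>W\<^esub> vec D \<otimes>\<^bsub>W\<^esub> t"
    by (simp only: vec_sym_diff_mult_t_pow_Suc)
  also have "\<dots> \<in> ball (m + 4 * card F' + 4 * card S + 1)"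
  proof -
    have "vec E \<otimes>\<^bsub>W\<^esub> t [^]\<^bsub>W\<^esub> m \<in> ball (m + 4 * card F')"
      unfolding E_def by (rule Suc.IH) (auto simp: F'_def)
    moreover have "vec D \<in> ball (4 * card S)"
      unfolding D_def using fin(2) \<open>S \<subseteq> X\<close> by (rule vec_xor_sum_comm_vec_in_ball)
    ultimately show ?thesis
      using gen_in_ball[OF t_in_X] by (rule mult_in_ball[OF mult_in_ball])
  qed
  finally have "vec (xor_sum shifted_comm_vec F) \<otimes>\<^bsub>W\<^esub> t [^]\<^bsub>W\<^esub> Suc m
      \<in> ball (m + 4 * card F' + 4 * card S + 1)" .
  moreover have "card F = card F' + card S"
    using fin F_split by (simp add: card_Un_disjoint card_image inj_on_def)
  ultimately show ?case
    by (simp add: algebra_simps)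
qed

lemma vec_in_ball_of_comm_module:
  assumes "u \<in> comm_module"
  shows "vec u \<in> ball (6 * p)"
proof -
  obtain F0 where F0: "F0 \<subseteq> {0..<p} \<times> X" "u = xor_sum shifted_comm_vec F0"
    using assms unfolding comm_module_def by blast
  have "\<exists>F \<subseteq> F0. card F \<le> card {0..<p} \<and> xor_sum shifted_comm_vec F = xor_sum shifted_comm_vec F0"
    by (rule xor_sum_subfamily_card_le[OF finite_index_subset[OF F0(1)]])
      (simp_all add: shifted_comm_vec_subset)
  then obtain F where F: "F \<subseteq> F0" "card F \<le> p" "xor_sum shifted_comm_vec F = u"
    using F0(2) by auto
  have "vec u \<otimes>\<^bsub>W\<^esub> t [^]\<^bsub>W\<^esub> p \<in> ball (p + 4 * card F)"
    unfolding F(3)[symmetric] using F(1) F0(1) by (intro vec_xor_sum_mult_t_pow_in_ball) blast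
  then have "vec u \<otimes>\<^bsub>W\<^esub> t [^]\<^bsub>W\<^esub> p \<otimes>\<^bsub>W\<^esub> inv\<^bsub>W\<^esub> (t [^]\<^bsub>W\<^esub> p) \<in> ball (p + 4 * card F + p)"
    using inv_t_pow_in_ball by (rule mult_in_ball)
  moreover have "vec u \<in> carrier W"
    using comm_module_subset[OF assms] by (rule vec_in_carrier[OF p_pos])
  then have "vec u \<otimes>\<^bsub>W\<^esub> t [^]\<^bsub>W\<^esub> p \<otimes>\<^bsub>W\<^esub> inv\<^bsub>W\<^esub> (t [^]\<^bsub>W\<^esub> p) = vec u"
    using t_in_carrier by (simp add: W.m_assoc)
  moreover have "p + 4 * card F + p \<le> 6 * p"
    using F(2) by simp
  ultimately show ?thesis
    by (metis in_ball_mono)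
qed

lemma odd_weight_generator:
  obtains x where "x \<in> X" "odd_weight x"
proof -
  have "vec {0} \<in> carrier W"
    by (simp add: vec_in_carrier[OF p_pos] p_pos)
  moreover have "odd_weight (vec {0})"
    by (simp add: odd_weight_def vec_def)
  ultimately have "{x \<in> carrier W. \<not> odd_weight x} \<noteq> carrier W"
    by blast
  then show ?thesis
    using W.generator_not_in_proper_subgroup[OF generate_X subgroup_even_weight[OF p_pos]]
      X_subset that
    by blast
qed

text \<open>The witness is \<open>t\<^sup>p\<close> if \<open>t\<close> has odd weight, and otherwise \<open>x t\<^sup>-\<^sup>k\<close> for a generator
  \<open>x\<close> of odd weight.\<close>
lemma odd_vec_in_ball:
  obtains C where "C \<subseteq> {0..<p}" "odd (card C)" "vec C \<in> ball p"
proof (cases "odd_weight t")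
  case True
  have "vec (fst (t [^]\<^bsub>W\<^esub> p)) = t [^]\<^bsub>W\<^esub> p"
    by (rule vec_fst) (simp add: snd_pow)
  moreover have "t [^]\<^bsub>W\<^esub> p \<in> carrier W"
    using t_in_carrier by simp
  moreover have "odd_weight (t [^]\<^bsub>W\<^esub> p)"
    using True odd_p t_in_carrier by (simp add: odd_weight_pow[OF p_pos])
  ultimately show ?thesis
    using that[of "fst (t [^]\<^bsub>W\<^esub> p)"] t_pow_in_ball[of p]
    by (simp add: odd_weight_def wreath_carrier_iff)
next
  case False
  obtain x where x: "x \<in> X" "odd_weight x"
    by (rule odd_weight_generator)
  then have "x \<in> carrier W"
    using X_subset by blast
  then obtain B k where B: "B \<subseteq> {0..<p}" "k < p" "x = vec B \<otimes>\<^bsub>W\<^esub> t [^]\<^bsub>W\<^esub> k"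
    by (rule decompose_vec_mult_t_pow)
  have "vec B = x \<otimes>\<^bsub>W\<^esub> inv\<^bsub>W\<^esub> (t [^]\<^bsub>W\<^esub> k)"
    using B t_in_carrier p_pos by (simp add: vec_in_carrier W.m_assoc)
  moreover have "x \<otimes>\<^bsub>W\<^esub> inv\<^bsub>W\<^esub> (t [^]\<^bsub>W\<^esub> k) \<in> ball (1 + k)"
    using gen_in_ball[OF x(1)] inv_t_pow_in_ball by (rule mult_in_ball)
  ultimately have "vec B \<in> ball p"
    using B(2) in_ball_mono by simp
  moreover have "odd (card B)"
  proof -
    have "odd_weight (vec B \<otimes>\<^bsub>W\<^esub> t [^]\<^bsub>W\<^esub> k) \<longleftrightarrow> odd_weight (vec B) \<noteq> odd_weight (t [^]\<^bsub>W\<^esub> k)"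
      using B(1) t_in_carrier by (intro odd_weight_mult) (simp_all add: vec_in_carrier[OF p_pos])
    moreover have "\<not> odd_weight (t [^]\<^bsub>W\<^esub> k)"
      using False t_in_carrier by (simp add: odd_weight_pow[OF p_pos])
    ultimately have "odd_weight (vec B)"
      using x(2) B(3) by simp
    then show ?thesis
      by (simp add: odd_weight_def vec_def)
  qed
  ultimately show ?thesis
    using that B(1) by blast
qed

lemma vec_in_ball:
  assumes "B \<subseteq> {0..<p}"
  shows "vec B \<in> ball (7 * p)"
proof (cases "even (card B)")
  case True
  then have "vec B \<in> ball (6 * p)"
    using assms by (intro vec_in_ball_of_comm_module even_in_comm_module)
  then show ?thesis
    by (rule in_ball_mono) simp
next
  case False
  obtain C where C: "C \<subseteq> {0..<p}" "odd (card C)" "vec C \<in> ball p"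
    by (rule odd_vec_in_ball)
  have "even (card (sym_diff B C))"
    using False C(2) odd_card_sym_diff[OF finite_subset[OF assms] finite_subset[OF C(1)]] by simp
  moreover have "sym_diff B C \<subseteq> {0..<p}"
    using assms C(1) by blast
  ultimately have "vec (sym_diff B C) \<in> ball (6 * p)"
    by (intro vec_in_ball_of_comm_module even_in_comm_module)
  then have "vec (sym_diff B C) \<otimes>\<^bsub>W\<^esub> vec C \<in> ball (6 * p + p)"
    using C(3) by (rule mult_in_ball)
  moreover have "sym_diff (sym_diff B C) C = B"
    by blast
  ultimately show ?thesis
    using C(1) by (simp add: vec_mult_vec)
qed

lemma carrier_subset_ball: "carrier W \<subseteq> ball (8 * p)"
proof
  fix g
  assume "g \<in> carrier W"
  then obtain B k where "B \<subseteq> {0..<p}" "k < p" "g = vec B \<otimes>\<^bsub>W\<^esub> t [^]\<^bsub>W\<^esub> k"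
    by (rule decompose_vec_mult_t_pow)
  moreover have "vec B \<otimes>\<^bsub>W\<^esub> t [^]\<^bsub>W\<^esub> k \<in> ball (7 * p + k)"
    using vec_in_ball[OF \<open>B \<subseteq> {0..<p}\<close>] t_pow_in_ball by (rule mult_in_ball)
  ultimately show "g \<in> ball (8 * p)"
    using in_ball_mono by simp
qed

end

lemma cay_diam_wreath_le:
  assumes "prime p" "odd p" "X \<subseteq> carrier (wreath p)" "generate (wreath p) X = carrier (wreath p)"
  shows "cay_diam (wreath p) X \<le> 8 * p"
proof -
  have p_pos: "0 < p"
    using assms(1) prime_gt_0_nat by blast
  interpret W: group "wreath p"
    using group_wreath[OF p_pos] .
  have "({}, 1) \<in> carrier (wreath p)"
    using prime_ge_2_nat[OF assms(1)] by (simp add: wreath_carrier_iff)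
  then have "{x \<in> carrier (wreath p). snd x = 0} \<noteq> carrier (wreath p)"
    by force
  then obtain t where "t \<in> X" "snd t \<noteq> 0"
    using W.generator_not_in_proper_subgroup[OF assms(4) subgroup_base[OF p_pos]] assms(3)
    by blast
  then interpret wreath_generating_set p X t
    using assms by unfold_locales
  show ?thesis
    by (rule cay_diam_le) (rule carrier_subset_ball)
qed

theorem theorem1:
  fixes p :: nat
  assumes "prime p" and "odd p"
  shows "diam_max (wreath p) \<le> 20 * (p - 1)"
proof (rule diam_max_le)
  show "group (wreath p)"
    using assms(1) prime_gt_0_nat by (blast intro: group_wreath)
  show "finite (carrier (wreath p))"
    by (rule finite_carrier_wreath)
  fix X
  assume X: "X \<subseteq> carrier (wreath p)" "generate (wreath p) X = carrier (wreath p)"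
  have "cay_diam (wreath p) X \<le> 8 * p"
    by (rule cay_diam_wreath_le[OF assms X])
  also have "8 * p \<le> 20 * (p - 1)"
    using prime_ge_2_nat[OF assms(1)] by simp
  finally show "cay_diam (wreath p) X \<le> 20 * (p - 1)" .
qed

end
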